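(* Let $G$ be a graph of order $n\ge3$ with minimum degree $\delta(G)=2$. Then $\operatorname{ZIR}(G)>\frac n3$.
   Context: A nonempty $F\subseteq V(G)$ is a fort if every $v\notin F$ has $|N(v)\cap F|\ne1$. A private fort of $x\in S$ relative to $S$ is a fort $F$ with $S\cap F=\{x\}$; $S$ is a ZIr-set if every element of $S$ has a private fort. $\operatorname{ZIR}(G)$ is the maximum cardinality of an inclusion-maximal ZIr-set. *)

theory Defs
  imports Main
begin

definition simple_graph :: "'a set \<Rightarrow> ('a \<Rightarrow> 'a \<Rightarrow> bool) \<Rightarrow> bool" where
  "simple_graph V E \<longleftrightarrow> finite V \<and> (\<forall>u v. E u v \<longrightarrow> u \<in> V \<and> v \<in> V)
     \<and> (\<forall>u v. E u v \<longrightarrow> E v u) \<and> (\<forall>v. \<not> E v v)"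

definition nbhd :: "'a set \<Rightarrow> ('a \<Rightarrow> 'a \<Rightarrow> bool) \<Rightarrow> 'a \<Rightarrow> 'a set" where
  "nbhd V E v = {u \<in> V. E v u}"

definition degree :: "'a set \<Rightarrow> ('a \<Rightarrow> 'a \<Rightarrow> bool) \<Rightarrow> 'a \<Rightarrow> nat" where
  "degree V E v = card (nbhd V E v)"

definition min_degree :: "'a set \<Rightarrow> ('a \<Rightarrow> 'a \<Rightarrow> bool) \<Rightarrow> nat" where
  "min_degree V E = Min (degree V E ` V)"

definition is_fort :: "'a set \<Rightarrow> ('a \<Rightarrow> 'a \<Rightarrow> bool) \<Rightarrow> 'a set \<Rightarrow> bool" where
  "is_fort V E F \<longleftrightarrow> F \<noteq> {} \<and> F \<subseteq> V \<and>
     (\<forall>v \<in> V - F. card (nbhd V E v \<inter> F) \<noteq> 1)"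

definition private_fort :: "'a set \<Rightarrow> ('a \<Rightarrow> 'a \<Rightarrow> bool) \<Rightarrow> 'a set \<Rightarrow> 'a \<Rightarrow> 'a set \<Rightarrow> bool" where
  "private_fort V E S x F \<longleftrightarrow> is_fort V E F \<and> S \<inter> F = {x}"

definition ZIr_set :: "'a set \<Rightarrow> ('a \<Rightarrow> 'a \<Rightarrow> bool) \<Rightarrow> 'a set \<Rightarrow> bool" where
  "ZIr_set V E S \<longleftrightarrow> S \<subseteq> V \<and> (\<forall>x \<in> S. \<exists>F. private_fort V E S x F)"

definition maximal_ZIr_set :: "'a set \<Rightarrow> ('a \<Rightarrow> 'a \<Rightarrow> bool) \<Rightarrow> 'a set \<Rightarrow> bool" where
  "maximal_ZIr_set V E S \<longleftrightarrow> ZIr_set V E S \<and> (\<forall>T. ZIr_set V E T \<and> S \<subseteq> T \<longrightarrow> T = S)"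

definition ZIR :: "'a set \<Rightarrow> ('a \<Rightarrow> 'a \<Rightarrow> bool) \<Rightarrow> nat" where
  "ZIR V E = Max (card ` {S. maximal_ZIr_set V E S})"

end

theory Submission
  imports Defs
begin

text \<open>
  If every vertex of S has at least two neighbours outside S, then S is a ZIr-set: the complement
  of S - {x} is a private fort of x. Let Y be a maximal independent set of degree-2 vertices, N its
  neighbourhood and R the remaining vertices; then |N| \<le> 2|Y| and every vertex of R has degree at
  least 3. Split R into two sides so that no vertex has more neighbours in R on its own side than
  on the other, and let P be the larger side. Then every vertex of S = P \<union> Y has two neighbours
  outside S, and 3|S| > |V| unless R is empty and |N| = 2|Y|. In that case V is the disjoint union
  of the triples {y} \<union> N(y), and a ZIr-set of size |Y| + 1 is obtained either by exchanging some
  y for its two neighbours or, if each y lies in a triangle y m c with deg m = 2, by adding one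
  such c to Y, the other vertices of Y having the forts {y, m}.
\<close>

lemma simple_graphD:
  assumes "simple_graph V E"
  shows "finite V" and "E u v \<Longrightarrow> u \<in> V" and "E u v \<Longrightarrow> v \<in> V"
    and "E u v \<Longrightarrow> E v u" and "\<not> E v v"
  using assms unfolding simple_graph_def by blast+

lemma nbhd_subset: "nbhd V E v \<subseteq> V"
  by (auto simp: nbhd_def)

lemma finite_nbhd: "finite V \<Longrightarrow> finite (nbhd V E v)"
  using finite_subset[OF nbhd_subset] .

lemma card_nbhd: "card (nbhd V E v) = degree V E v"
  unfolding degree_def ..

lemma min_degree_le_degree: "finite V \<Longrightarrow> v \<in> V \<Longrightarrow> min_degree V E \<le> degree V E v"
  unfolding min_degree_def by simp

lemma private_fort_complement:
  assumes "S \<subseteq> V" and "x \<in> S"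
    and "\<And>v. v \<in> S - {x} \<Longrightarrow> card (nbhd V E v - (S - {x})) \<noteq> 1"
  shows "private_fort V E S x (V - (S - {x}))"
proof -
  have "nbhd V E v \<inter> (V - (S - {x})) = nbhd V E v - (S - {x})" for v
    using nbhd_subset[of V E v] by blast
  moreover have "V - (V - (S - {x})) = S - {x}"
    using assms(1) by blast
  ultimately show ?thesis
    using assms unfolding private_fort_def is_fort_def by auto
qed

lemma ZIr_set_if_two_nbrs_outside:
  assumes "finite V" and "S \<subseteq> V"
    and two: "\<And>s. s \<in> S \<Longrightarrow> 2 \<le> card (nbhd V E s - S)"
  shows "ZIr_set V E S"
  unfolding ZIr_set_def
proof (intro conjI ballI)
  show "S \<subseteq> V" by fact
  fix x assume "x \<in> S"
  have "private_fort V E S x (V - (S - {x}))"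
  proof (rule private_fort_complement[OF \<open>S \<subseteq> V\<close> \<open>x \<in> S\<close>])
    fix v assume v: "v \<in> S - {x}"
    have "card (nbhd V E v - S) \<le> card (nbhd V E v - (S - {x}))"
      by (rule card_mono) (auto simp: finite_nbhd[OF assms(1)])
    then show "card (nbhd V E v - (S - {x})) \<noteq> 1"
      using two[of v] v by simp
  qed
  then show "\<exists>F. private_fort V E S x F" ..
qed

lemma is_fort_adjacent_twins:
  assumes sg: "simple_graph V E" and "E x y"
    and twins: "nbhd V E x - {y} = nbhd V E y - {x}"
  shows "is_fort V E {x, y}"
  unfolding is_fort_def
proof (intro conjI ballI)
  have "x \<noteq> y" and xy: "x \<in> V" "y \<in> V"
    using simple_graphD[OF sg] \<open>E x y\<close> by blast+
  show "{x, y} \<noteq> {}" and "{x, y} \<subseteq> V"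
    using xy by simp_all
  fix v assume v: "v \<in> V - {x, y}"
  have "E v x \<longleftrightarrow> E v y"
    using twins v simple_graphD(4)[OF sg] unfolding nbhd_def by blast
  then have "nbhd V E v \<inter> {x, y} \<in> {{}, {x, y}}"
    using xy unfolding nbhd_def by auto
  then show "card (nbhd V E v \<inter> {x, y}) \<noteq> 1"
    using \<open>x \<noteq> y\<close> by auto
qed

lemma is_fort_degree_two_triangle:
  assumes sg: "simple_graph V E"
    and nx: "nbhd V E x = {m, c}" and "E m c" and "degree V E m = 2"
  shows "is_fort V E {x, m}"
proof (rule is_fort_adjacent_twins[OF sg])
  have "E x m" "E x c"
    using nx unfolding nbhd_def by auto
  then show "E x m" by simp
  have "x \<noteq> c" "m \<noteq> c"
    using simple_graphD(5)[OF sg] \<open>E x c\<close> \<open>E m c\<close> by blast+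
  have "{x, c} \<subseteq> nbhd V E m"
    using simple_graphD[OF sg] \<open>E x m\<close> \<open>E m c\<close> unfolding nbhd_def by blast
  moreover have "card {x, c} = card (nbhd V E m)"
    using \<open>degree V E m = 2\<close> \<open>x \<noteq> c\<close> by (simp add: degree_def)
  ultimately have "nbhd V E m = {x, c}"
    using card_subset_eq[OF finite_nbhd[OF simple_graphD(1)[OF sg]]] by metis
  then show "nbhd V E x - {m} = nbhd V E m - {x}"
    using nx \<open>x \<noteq> c\<close> \<open>m \<noteq> c\<close> by auto
qed

lemma card_le_ZIR:
  assumes "finite V" and "ZIr_set V E S"
  shows "card S \<le> ZIR V E"
proof -
  let ?Z = "{T. ZIr_set V E T \<and> S \<subseteq> T}"
  have fin: "finite ?Z"
    by (rule finite_subset[of _ "Pow V"]) (auto simp: ZIr_set_def assms(1))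
  have ne: "?Z \<noteq> {}"
    using assms(2) by blast
  obtain T where T: "T \<in> ?Z" and max: "\<forall>T'\<in>?Z. T \<subseteq> T' \<longrightarrow> T = T'"
    using finite_has_maximal[OF fin ne] by blast
  have "maximal_ZIr_set V E T"
    using T max unfolding maximal_ZIr_set_def by auto
  moreover have "finite {T. maximal_ZIr_set V E T}"
    by (rule finite_subset[of _ "Pow V"]) (auto simp: maximal_ZIr_set_def ZIr_set_def assms(1))
  ultimately have "card T \<le> ZIR V E"
    unfolding ZIR_def by (intro Max_ge) auto
  moreover have "finite T"
    using T assms(1) finite_subset unfolding ZIr_set_def by blast
  then have "card S \<le> card T"
    using T card_mono by blast
  ultimately show ?thesis by simp
qed

definition monochromatic_pairs :: "'a set \<Rightarrow> ('a \<Rightarrow> 'a \<Rightarrow> bool) \<Rightarrow> ('a \<Rightarrow> 'b) \<Rightarrow> ('a \<times> 'a) set"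
  where "monochromatic_pairs U E g = {p \<in> U \<times> U. E (fst p) (snd p) \<and> g (fst p) = g (snd p)}"

lemma card_monochromatic_pairs:
  assumes sym: "\<And>u w. E u w \<Longrightarrow> E w u" and irr: "\<And>u. \<not> E u u"
    and "finite U" and "v \<in> U"
  shows "card (monochromatic_pairs U E g) =
    card {p \<in> monochromatic_pairs U E g. fst p \<noteq> v \<and> snd p \<noteq> v}
    + 2 * card {w \<in> U. E v w \<and> g w = g v}"
proof -
  let ?M = "monochromatic_pairs U E g"
  let ?R = "{p \<in> ?M. fst p \<noteq> v \<and> snd p \<noteq> v}"
  let ?W = "{w \<in> U. E v w \<and> g w = g v}"
  let ?L = "Pair v ` ?W" and ?T = "(\<lambda>w. (w, v)) ` ?W"
  have split: "?M = ?R \<union> (?L \<union> ?T)"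
    using \<open>v \<in> U\<close> sym unfolding monochromatic_pairs_def by (auto simp: image_iff)
  have "finite ?W"
    using \<open>finite U\<close> by simp
  have "finite ?M"
    unfolding monochromatic_pairs_def by (rule finite_subset[of _ "U \<times> U"]) (use \<open>finite U\<close> in auto)
  have "card ?M = card (?R \<union> (?L \<union> ?T))"
    using split by (rule arg_cong)
  also have "\<dots> = card ?R + card (?L \<union> ?T)"
    using \<open>finite ?M\<close> \<open>finite ?W\<close> by (intro card_Un_disjoint) auto
  finally have "card ?M = card ?R + card (?L \<union> ?T)" .
  moreover have "card (?L \<union> ?T) = card ?L + card ?T"
    using \<open>finite ?W\<close> irr by (intro card_Un_disjoint) auto
  moreover have "card ?L = card ?W" and "card ?T = card ?W"
    by (auto intro: card_image simp: inj_on_def)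
  ultimately show ?thesis by simp
qed

text \<open>
  Recolouring a single vertex v changes the number of monochromatic ordered pairs by twice the
  change in the number of neighbours of v sharing its colour, so a colouring minimising that
  number is locally optimal at every vertex.
\<close>

lemma ex_colouring_own_colour_minority:
  assumes sym: "\<And>u w. E u w \<Longrightarrow> E w u" and irr: "\<And>u. \<not> E u u" and "finite U"
  shows "\<exists>g :: 'a \<Rightarrow> bool. \<forall>v\<in>U.
    card {w \<in> U. E v w \<and> g w = g v} \<le> card {w \<in> U. E v w \<and> g w \<noteq> g v}"
proof -
  obtain g :: "'a \<Rightarrow> bool" where min:
    "\<And>h :: 'a \<Rightarrow> bool. card (monochromatic_pairs U E g) \<le> card (monochromatic_pairs U E h)"
    using ex_has_least_nat[where P = "\<lambda>_. True" and k = "\<lambda>_. True"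
        and m = "\<lambda>g :: 'a \<Rightarrow> bool. card (monochromatic_pairs U E g)"]
    by blast
  have "card {w \<in> U. E v w \<and> g w = g v} \<le> card {w \<in> U. E v w \<and> g w \<noteq> g v}"
    if "v \<in> U" for v
  proof -
    let ?h = "g(v := \<not> g v)"
    have "{p \<in> monochromatic_pairs U E ?h. fst p \<noteq> v \<and> snd p \<noteq> v} =
          {p \<in> monochromatic_pairs U E g. fst p \<noteq> v \<and> snd p \<noteq> v}"
      unfolding monochromatic_pairs_def by auto
    moreover have "{w \<in> U. E v w \<and> ?h w = ?h v} = {w \<in> U. E v w \<and> g w \<noteq> g v}"
      using irr by auto
    ultimately show ?thesis
      using min[of ?h] card_monochromatic_pairs[where E = E, OF sym irr \<open>finite U\<close> \<open>v \<in> U\<close>, of g]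
        card_monochromatic_pairs[where E = E, OF sym irr \<open>finite U\<close> \<open>v \<in> U\<close>, of ?h]
      by simp
  qed
  then show ?thesis by blast
qed

lemma ex_large_subset_few_inner_nbrs:
  assumes sym: "\<And>u w. E u w \<Longrightarrow> E w u" and irr: "\<And>u. \<not> E u u" and "finite U"
  shows "\<exists>P\<subseteq>U. card U \<le> 2 * card P \<and>
    (\<forall>v\<in>P. 2 * card {w \<in> P. E v w} \<le> card {w \<in> U. E v w})"
proof -
  obtain g :: "'a \<Rightarrow> bool" where g: "\<And>v. v \<in> U \<Longrightarrow>
      card {w \<in> U. E v w \<and> g w = g v} \<le> card {w \<in> U. E v w \<and> g w \<noteq> g v}"
    using ex_colouring_own_colour_minority[where E = E, OF sym irr \<open>finite U\<close>] by blast
  define side where "side b = {u \<in> U. g u = b}" for b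
  have "card U = card (side True) + card (side False)"
    using card_Int_Diff[OF \<open>finite U\<close>, of "{u. g u}"] unfolding side_def
    by (simp add: Int_def set_diff_eq conj_commute)
  then obtain b where large: "card U \<le> 2 * card (side b)"
    by (metis add_le_mono mult_2 nat_le_linear)
  have "2 * card {w \<in> side b. E v w} \<le> card {w \<in> U. E v w}" if "v \<in> side b" for v
  proof -
    have "{w \<in> side b. E v w} = {w \<in> U. E v w \<and> g w = g v}"
      and "{w \<in> U. E v w} - side b = {w \<in> U. E v w \<and> g w \<noteq> g v}"
      using that unfolding side_def by auto
    then show ?thesis
      using g[of v] that card_Int_Diff[of "{w \<in> U. E v w}" "side b"] \<open>finite U\<close>
      unfolding side_def by (simp add: Int_def conj_commute)
  qed
  moreover have "side b \<subseteq> U"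
    unfolding side_def by blast
  ultimately show ?thesis
    using large by blast
qed

definition set_nbhd :: "'a set \<Rightarrow> ('a \<Rightarrow> 'a \<Rightarrow> bool) \<Rightarrow> 'a set \<Rightarrow> 'a set"
  where "set_nbhd V E Y = (\<Union>y\<in>Y. nbhd V E y)"

lemma ex_maximal_independent_subset:
  assumes "finite D" and irr: "\<And>u. \<not> E u u"
  shows "\<exists>Y\<subseteq>D. (\<forall>a\<in>Y. \<forall>b\<in>Y. \<not> E a b) \<and> (\<forall>v\<in>D. v \<in> Y \<or> (\<exists>y\<in>Y. E y v \<or> E v y))"
proof -
  define I where "I = {Y. Y \<subseteq> D \<and> (\<forall>a\<in>Y. \<forall>b\<in>Y. \<not> E a b)}"
  have "finite I"
    unfolding I_def by (rule finite_subset[of _ "Pow D"]) (auto simp: \<open>finite D\<close>)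
  moreover have "{} \<in> I"
    unfolding I_def by simp
  ultimately obtain Y where Y: "Y \<in> I" and max: "\<And>Z. Z \<in> I \<Longrightarrow> Y \<subseteq> Z \<Longrightarrow> Y = Z"
    using finite_has_maximal2 by metis
  have "v \<in> Y \<or> (\<exists>y\<in>Y. E y v \<or> E v y)" if "v \<in> D" for v
  proof (rule ccontr)
    assume outside: "\<not> (v \<in> Y \<or> (\<exists>y\<in>Y. E y v \<or> E v y))"
    then have "insert v Y \<in> I"
      using Y irr \<open>v \<in> D\<close> unfolding I_def by auto
    then have "Y = insert v Y"
      using max by blast
    then show False
      using outside by blast
  qed
  then show ?thesis
    using Y unfolding I_def by blast
qed

locale independent_degree_two_set =
  fixes V :: "'a set" and E :: "'a \<Rightarrow> 'a \<Rightarrow> bool" and Y :: "'a set"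
  assumes graph: "simple_graph V E"
    and degree_ge_two: "\<And>v. v \<in> V \<Longrightarrow> 2 \<le> degree V E v"
    and Y_subset: "Y \<subseteq> V"
    and independent: "\<And>a b. a \<in> Y \<Longrightarrow> b \<in> Y \<Longrightarrow> \<not> E a b"
    and degree_Y: "\<And>y. y \<in> Y \<Longrightarrow> degree V E y = 2"
begin

abbreviation NY :: "'a set" where "NY \<equiv> set_nbhd V E Y"

abbreviation R :: "'a set" where "R \<equiv> V - (Y \<union> NY)"

lemma finite_V: "finite V"
  using simple_graphD(1)[OF graph] .

lemma sym: "E u v \<Longrightarrow> E v u"
  using simple_graphD(4)[OF graph] .

lemma irr: "\<not> E v v"
  using simple_graphD(5)[OF graph] .

lemma mem_nbhd_iff: "u \<in> nbhd V E v \<longleftrightarrow> E v u"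
  using simple_graphD(3)[OF graph] unfolding nbhd_def by blast

lemma nbhd_Y_eq_pair:
  assumes "y \<in> Y"
  obtains p q where "nbhd V E y = {p, q}" and "p \<noteq> q"
  using degree_Y[OF assms] unfolding degree_def card_2_iff by blast

lemma set_nbhd_Int_Y: "NY \<inter> Y = {}"
  using independent by (auto simp: set_nbhd_def nbhd_def)

lemma nbhd_Int_Y_if_in_Y: "y \<in> Y \<Longrightarrow> nbhd V E y \<inter> Y = {}"
  using independent by (auto simp: nbhd_def)

lemma nbhd_Int_Y_if_in_R: "s \<in> R \<Longrightarrow> nbhd V E s \<inter> Y = {}"
  by (auto simp: set_nbhd_def nbhd_def dest: sym)

lemma card_set_nbhd_le: "card NY \<le> 2 * card Y"
proof -
  have "finite Y"
    using finite_V Y_subset finite_subset by blast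
  then have "card NY \<le> (\<Sum>y\<in>Y. card (nbhd V E y))"
    unfolding set_nbhd_def by (rule card_UN_le)
  also have "\<dots> = 2 * card Y"
    using degree_Y by (simp add: card_nbhd)
  finally show ?thesis .
qed

lemma card_V_eq: "card V = card R + card Y + card NY"
proof -
  have "Y \<union> NY \<subseteq> V"
    using Y_subset by (auto simp: set_nbhd_def nbhd_def)
  then have "card V = card R + card (Y \<union> NY)"
    using card_Int_Diff[OF finite_V, of "Y \<union> NY"] by (simp add: Int_absorb1)
  moreover have "finite Y" and "finite NY"
    using \<open>Y \<union> NY \<subseteq> V\<close> finite_V by (auto intro: finite_subset)
  then have "card (Y \<union> NY) = card Y + card NY"
    using set_nbhd_Int_Y by (intro card_Un_disjoint) auto
  ultimately show ?thesis by simp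
qed

lemma ZIr_set_Un_Y:
  assumes "P \<subseteq> R" and two: "\<And>s. s \<in> P \<Longrightarrow> 2 \<le> card (nbhd V E s - P)"
  shows "ZIr_set V E (P \<union> Y)"
proof (rule ZIr_set_if_two_nbrs_outside[OF finite_V])
  show "P \<union> Y \<subseteq> V"
    using assms(1) Y_subset by blast
  fix s assume "s \<in> P \<union> Y"
  then show "2 \<le> card (nbhd V E s - (P \<union> Y))"
  proof
    assume "s \<in> P"
    then have "nbhd V E s \<inter> Y = {}"
      using nbhd_Int_Y_if_in_R assms(1) by blast
    then have "nbhd V E s - (P \<union> Y) = nbhd V E s - P"
      by blast
    then show ?thesis
      using two[OF \<open>s \<in> P\<close>] by simp
  next
    assume "s \<in> Y"
    then have "nbhd V E s \<subseteq> NY"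
      unfolding set_nbhd_def by blast
    then have "nbhd V E s - (P \<union> Y) = nbhd V E s"
      using assms(1) set_nbhd_Int_Y by blast
    then show ?thesis
      using degree_Y[OF \<open>s \<in> Y\<close>] by (simp add: card_nbhd)
  qed
qed

lemma two_nbrs_outside_if_sparse:
  assumes maximal: "\<And>v. v \<in> V \<Longrightarrow> degree V E v = 2 \<Longrightarrow> v \<in> Y \<union> NY"
    and "P \<subseteq> R" and "s \<in> P"
    and sparse: "2 * card {w \<in> P. E s w} \<le> card {w \<in> R. E s w}"
  shows "2 \<le> card (nbhd V E s - P)"
proof -
  have "s \<in> R"
    using assms(2,3) by blast
  then have "3 \<le> degree V E s"
    using degree_ge_two[of s] maximal[of s] by fastforce
  have "card {w \<in> R. E s w} \<le> degree V E s"
    unfolding card_nbhd[symmetric] using finite_nbhd[OF finite_V]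
    by (intro card_mono) (auto simp: mem_nbhd_iff)
  moreover have "{w \<in> P. E s w} = nbhd V E s \<inter> P"
    using \<open>P \<subseteq> R\<close> mem_nbhd_iff by blast
  moreover have "degree V E s = card (nbhd V E s \<inter> P) + card (nbhd V E s - P)"
    unfolding card_nbhd[symmetric] using finite_nbhd[OF finite_V] by (rule card_Int_Diff)
  ultimately show ?thesis
    using sparse \<open>3 \<le> degree V E s\<close> by simp
qed

lemma ex_ZIr_set_if_not_tight:
  assumes maximal: "\<And>v. v \<in> V \<Longrightarrow> degree V E v = 2 \<Longrightarrow> v \<in> Y \<union> NY"
    and not_tight: "R \<noteq> {} \<or> card NY < 2 * card Y"
  shows "\<exists>S. ZIr_set V E S \<and> card V < 3 * card S"
proof -
  obtain P where "P \<subseteq> R" and large: "card R \<le> 2 * card P"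
    and sparse: "\<And>v. v \<in> P \<Longrightarrow> 2 * card {w \<in> P. E v w} \<le> card {w \<in> R. E v w}"
    using ex_large_subset_few_inner_nbrs[where E = E, OF sym irr, of R] finite_V by blast
  have "card V < 3 * card (P \<union> Y)"
  proof -
    have "card (P \<union> Y) = card P + card Y"
      using \<open>P \<subseteq> R\<close> Y_subset finite_V by (intro card_Un_disjoint) (auto intro: finite_subset)
    moreover have "card P \<noteq> 0" if "R \<noteq> {}"
      using that large finite_V by auto
    ultimately show ?thesis
      using card_V_eq card_set_nbhd_le not_tight large by (cases "R = {}") auto
  qed
  moreover have "ZIr_set V E (P \<union> Y)"
    using ZIr_set_Un_Y[OF \<open>P \<subseteq> R\<close>] two_nbrs_outside_if_sparse[OF maximal \<open>P \<subseteq> R\<close> _ sparse]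
    by blast
  ultimately show ?thesis
    by blast
qed

lemma nbhd_disjoint_if_tight:
  assumes tight: "card NY = 2 * card Y"
    and "y \<in> Y" and "z \<in> Y" and "y \<noteq> z"
  shows "nbhd V E y \<inter> nbhd V E z = {}"
proof (rule ccontr)
  assume "nbhd V E y \<inter> nbhd V E z \<noteq> {}"
  then obtain p where p: "p \<in> nbhd V E y" "p \<in> nbhd V E z"
    by blast
  have "finite Y"
    using finite_V Y_subset finite_subset by blast
  have "NY = (nbhd V E y - {p}) \<union> (\<Union>x\<in>Y - {y}. nbhd V E x)"
    using \<open>y \<in> Y\<close> \<open>z \<in> Y\<close> \<open>y \<noteq> z\<close> p unfolding set_nbhd_def by blast
  then have "card NY \<le> card (nbhd V E y - {p}) + card (\<Union>x\<in>Y - {y}. nbhd V E x)"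
    by (simp add: card_Un_le)
  also have "card (\<Union>x\<in>Y - {y}. nbhd V E x) \<le> (\<Sum>x\<in>Y - {y}. card (nbhd V E x))"
    using \<open>finite Y\<close> by (intro card_UN_le) simp
  also have "(\<Sum>x\<in>Y - {y}. card (nbhd V E x)) = 2 * (card Y - 1)"
    using degree_Y \<open>y \<in> Y\<close> \<open>finite Y\<close> by (simp add: card_nbhd)
  also have "card (nbhd V E y - {p}) = 1"
    using degree_Y[OF \<open>y \<in> Y\<close>] p(1) finite_nbhd[OF finite_V] by (simp add: card_nbhd)
  finally show False
    using tight \<open>y \<in> Y\<close> \<open>finite Y\<close> card_gt_0_iff[of Y] by fastforce
qed

lemma two_nbrs_outside_exchange:
  assumes tight: "card NY = 2 * card Y"
    and "y \<in> Y" and ny: "nbhd V E y = {a, b}"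
    and no_triangle: "\<nexists>m c. nbhd V E y = {m, c} \<and> E m c \<and> degree V E m = 2"
  shows "2 \<le> card (nbhd V E a - insert a (insert b (Y - {y})))"
proof -
  have "a \<in> nbhd V E y"
    using ny by blast
  then have "2 \<le> degree V E a"
    using degree_ge_two nbhd_subset[of V E y] by blast
  have "a \<notin> nbhd V E a"
    using irr by (simp add: mem_nbhd_iff)
  have "nbhd V E a \<inter> (Y - {y}) = {}"
  proof (rule equals0I)
    fix z assume z: "z \<in> nbhd V E a \<inter> (Y - {y})"
    then have "a \<in> nbhd V E z \<inter> nbhd V E y"
      using \<open>a \<in> nbhd V E y\<close> sym by (auto simp: mem_nbhd_iff)
    then show False
      using nbhd_disjoint_if_tight[OF tight, of z y] z \<open>y \<in> Y\<close> by blast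
  qed
  then have "nbhd V E a - insert a (insert b (Y - {y})) = nbhd V E a - {b}"
    using \<open>a \<notin> nbhd V E a\<close> by auto
  moreover have "2 \<le> card (nbhd V E a - {b})"
  proof (cases "E a b")
    case True
    then have "degree V E a \<noteq> 2"
      using no_triangle ny by blast
    moreover have "b \<in> nbhd V E a"
      using True by (simp add: mem_nbhd_iff)
    ultimately show ?thesis
      using \<open>2 \<le> degree V E a\<close> finite_nbhd[OF finite_V, of E a]
      by (simp add: card_Diff_singleton card_nbhd)
  next
    case False
    then have "nbhd V E a - {b} = nbhd V E a"
      by (auto simp: mem_nbhd_iff)
    then show ?thesis
      using \<open>2 \<le> degree V E a\<close> by (simp add: card_nbhd)
  qed
  ultimately show ?thesis
    by simp
qed

lemma ZIr_set_exchange: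
  assumes tight: "card NY = 2 * card Y"
    and "y \<in> Y" and ny: "nbhd V E y = {p, q}"
    and no_triangle: "\<nexists>m c. nbhd V E y = {m, c} \<and> E m c \<and> degree V E m = 2"
  shows "ZIr_set V E (insert p (insert q (Y - {y})))"
proof (rule ZIr_set_if_two_nbrs_outside[OF finite_V])
  let ?S = "insert p (insert q (Y - {y}))"
  show "?S \<subseteq> V"
    using ny Y_subset by (auto simp: nbhd_def)
  fix s assume "s \<in> ?S"
  then consider "s = p" | "s = q" | "s \<in> Y - {y}"
    by blast
  then show "2 \<le> card (nbhd V E s - ?S)"
  proof cases
    case 1
    then show ?thesis
      using two_nbrs_outside_exchange[OF tight \<open>y \<in> Y\<close> ny no_triangle] by simp
  next
    case 2
    have "nbhd V E y = {q, p}" and "?S = insert q (insert p (Y - {y}))"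
      using ny by auto
    then show ?thesis
      using two_nbrs_outside_exchange[OF tight \<open>y \<in> Y\<close> _ no_triangle] 2 by metis
  next
    case 3
    have "nbhd V E s \<inter> Y = {}"
      using nbhd_Int_Y_if_in_Y 3 by blast
    moreover have "p \<notin> nbhd V E s" and "q \<notin> nbhd V E s"
      using nbhd_disjoint_if_tight[OF tight, of s y] 3 \<open>y \<in> Y\<close> ny by auto
    ultimately have "nbhd V E s - ?S = nbhd V E s"
      by blast
    then show ?thesis
      using degree_Y 3 by (simp add: card_nbhd)
  qed
qed

lemma private_fort_insert_Y:
  assumes "c \<in> V - Y"
  shows "private_fort V E (insert c Y) c (V - Y)"
proof -
  have "card (nbhd V E v - Y) \<noteq> 1" if "v \<in> Y" for v
    using nbhd_Int_Y_if_in_Y[OF that] degree_Y[OF that]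
    by (simp add: Diff_triv card_nbhd)
  then have "private_fort V E (insert c Y) c (V - (insert c Y - {c}))"
    using assms Y_subset by (intro private_fort_complement) auto
  moreover have "insert c Y - {c} = Y"
    using assms by blast
  ultimately show ?thesis
    by simp
qed

lemma ZIr_set_insert_triangle_vertex:
  assumes tight: "card NY = 2 * card Y"
    and triangles: "\<And>y. y \<in> Y \<Longrightarrow> \<exists>m c. nbhd V E y = {m, c} \<and> E m c \<and> degree V E m = 2"
    and "y\<^sub>0 \<in> Y" and ny\<^sub>0: "nbhd V E y\<^sub>0 = {m\<^sub>0, c\<^sub>0}" and "E m\<^sub>0 c\<^sub>0" and "degree V E m\<^sub>0 = 2"
  shows "ZIr_set V E (insert c\<^sub>0 Y)"
  unfolding ZIr_set_def
proof (intro conjI ballI)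
  have "c\<^sub>0 \<in> V - Y"
    using nbhd_Int_Y_if_in_Y[OF \<open>y\<^sub>0 \<in> Y\<close>] ny\<^sub>0 nbhd_subset[of V E y\<^sub>0] by blast
  then show "insert c\<^sub>0 Y \<subseteq> V"
    using Y_subset by blast
  fix x assume "x \<in> insert c\<^sub>0 Y"
  show "\<exists>F. private_fort V E (insert c\<^sub>0 Y) x F"
  proof (cases "x = c\<^sub>0")
    case True
    then show ?thesis
      using private_fort_insert_Y[OF \<open>c\<^sub>0 \<in> V - Y\<close>] by blast
  next
    case False
    then have "x \<in> Y"
      using \<open>x \<in> insert c\<^sub>0 Y\<close> by blast
    obtain m c where mc: "nbhd V E x = {m, c}" "E m c" "degree V E m = 2" and "m \<noteq> c\<^sub>0"
    proof (cases "x = y\<^sub>0")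
      case True
      then show ?thesis
        using that ny\<^sub>0 \<open>E m\<^sub>0 c\<^sub>0\<close> \<open>degree V E m\<^sub>0 = 2\<close> irr by blast
    next
      case False
      obtain m c where mc: "nbhd V E x = {m, c}" "E m c" "degree V E m = 2"
        using triangles[OF \<open>x \<in> Y\<close>] by blast
      moreover have "m \<noteq> c\<^sub>0"
        using nbhd_disjoint_if_tight[OF tight \<open>x \<in> Y\<close> \<open>y\<^sub>0 \<in> Y\<close> False] mc(1) ny\<^sub>0 by blast
      ultimately show ?thesis
        using that by blast
    qed
    have "m \<notin> Y"
      using nbhd_Int_Y_if_in_Y[OF \<open>x \<in> Y\<close>] mc(1) by blast
    then have "insert c\<^sub>0 Y \<inter> {x, m} = {x}"
      using \<open>x \<in> Y\<close> \<open>m \<noteq> c\<^sub>0\<close> by blast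
    then show ?thesis
      using is_fort_degree_two_triangle[OF graph mc] unfolding private_fort_def by blast
  qed
qed

lemma ex_ZIr_set_if_tight:
  assumes tight: "card NY = 2 * card Y" and "Y \<noteq> {}"
  shows "\<exists>S. ZIr_set V E S \<and> card S = card Y + 1"
proof -
  have "finite Y"
    using finite_V Y_subset finite_subset by blast
  show ?thesis
  proof (cases "\<forall>y\<in>Y. \<exists>m c. nbhd V E y = {m, c} \<and> E m c \<and> degree V E m = 2")
    case True
    obtain y\<^sub>0 where "y\<^sub>0 \<in> Y"
      using \<open>Y \<noteq> {}\<close> by blast
    then obtain m\<^sub>0 c\<^sub>0 where m\<^sub>0: "nbhd V E y\<^sub>0 = {m\<^sub>0, c\<^sub>0}" "E m\<^sub>0 c\<^sub>0" "degree V E m\<^sub>0 = 2"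
      using True by blast
    have "c\<^sub>0 \<notin> Y"
      using nbhd_Int_Y_if_in_Y[OF \<open>y\<^sub>0 \<in> Y\<close>] m\<^sub>0(1) by blast
    then have "card (insert c\<^sub>0 Y) = card Y + 1"
      using \<open>finite Y\<close> by simp
    moreover have "ZIr_set V E (insert c\<^sub>0 Y)"
      using ZIr_set_insert_triangle_vertex[OF tight _ \<open>y\<^sub>0 \<in> Y\<close> m\<^sub>0] True by blast
    ultimately show ?thesis
      by blast
  next
    case False
    then obtain y where "y \<in> Y"
      and no_triangle: "\<nexists>m c. nbhd V E y = {m, c} \<and> E m c \<and> degree V E m = 2"
      by blast
    obtain p q where pq: "nbhd V E y = {p, q}" "p \<noteq> q"
      using nbhd_Y_eq_pair[OF \<open>y \<in> Y\<close>] .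
    have "p \<notin> Y" and "q \<notin> Y"
      using nbhd_Int_Y_if_in_Y[OF \<open>y \<in> Y\<close>] pq(1) by blast+
    then have "card (insert p (insert q (Y - {y}))) = card Y + 1"
      using \<open>finite Y\<close> \<open>y \<in> Y\<close> pq(2) card_gt_0_iff[of Y] by auto
    moreover have "ZIr_set V E (insert p (insert q (Y - {y})))"
      using ZIr_set_exchange[OF tight \<open>y \<in> Y\<close> pq(1) no_triangle] .
    ultimately show ?thesis
      by blast
  qed
qed

lemma ex_ZIr_set_gt_third:
  assumes maximal: "\<And>v. v \<in> V \<Longrightarrow> degree V E v = 2 \<Longrightarrow> v \<in> Y \<union> NY"
    and "V \<noteq> {}"
  shows "\<exists>S. ZIr_set V E S \<and> card V < 3 * card S"
proof (cases "R = {} \<and> card NY = 2 * card Y")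
  case True
  then have "card R = 0"
    by (metis card.empty)
  then have "card V = 3 * card Y"
    using card_V_eq True by linarith
  then have "Y \<noteq> {}"
    using \<open>V \<noteq> {}\<close> finite_V by auto
  then obtain S where "ZIr_set V E S" and "card S = card Y + 1"
    using ex_ZIr_set_if_tight True by blast
  then show ?thesis
    using \<open>card V = 3 * card Y\<close> by auto
next
  case False
  then have "R \<noteq> {} \<or> card NY < 2 * card Y"
    using card_set_nbhd_le by linarith
  then show ?thesis
    using ex_ZIr_set_if_not_tight[OF maximal] by blast
qed

end

theorem corollary4p7:
  fixes V :: "'a set" and E :: "'a \<Rightarrow> 'a \<Rightarrow> bool"
  assumes "simple_graph V E"
    and "card V \<ge> 3"
    and "min_degree V E = 2"
  shows "3 * ZIR V E > card V"
proof -
  have "finite V"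
    using simple_graphD(1)[OF assms(1)] .
  let ?D = "{v \<in> V. degree V E v = 2}"
  have degree_ge_two: "2 \<le> degree V E v" if "v \<in> V" for v
    using min_degree_le_degree[OF \<open>finite V\<close> that, of E] assms(3) by simp
  obtain Y where "Y \<subseteq> ?D" and independent: "\<forall>a\<in>Y. \<forall>b\<in>Y. \<not> E a b"
    and maximal: "\<forall>v\<in>?D. v \<in> Y \<or> (\<exists>y\<in>Y. E y v \<or> E v y)"
    using ex_maximal_independent_subset[of ?D E] \<open>finite V\<close> simple_graphD(5)[OF assms(1)] by auto
  interpret independent_degree_two_set V E Y
    using assms(1) degree_ge_two \<open>Y \<subseteq> ?D\<close> independent by unfold_locales auto
  have "v \<in> Y \<union> NY" if "v \<in> V" and "degree V E v = 2" for v
    using maximal that sym by (auto simp: set_nbhd_def mem_nbhd_iff)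
  moreover have "V \<noteq> {}"
    using assms(2) by auto
  ultimately obtain S where "ZIr_set V E S" and "card V < 3 * card S"
    using ex_ZIr_set_gt_third by blast
  moreover have "card S \<le> ZIR V E"
    using card_le_ZIR[OF finite_V \<open>ZIr_set V E S\<close>] .
  ultimately show ?thesis
    by linarith
qed

end
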